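(* Let $q>0$ be a real number. For every $n\ge2$, all zeros of the polynomial $x\mapsto S_n(x,q)$ are real, nonpositive and simple.
   Context: Permutations of $[n]=\{1,\dots,n\}$ are written in standard cycle decomposition (each cycle starts with its smallest element, cycles in increasing order of smallest elements). $\pi$ has an excedance at $i$ if $\pi(i)>i$; ${\rm exc}(\pi)$ is the number of excedances, ${\rm cyc}(\pi)$ the number of cycles. A value $x$ is a double excedance of $\pi$ if $\pi^{-1}(x)<x<\pi(x)$. A permutation $\pi$ of $[n]$ is a simsun permutation of the second kind if for every $k\in\{0,1,\dots,n\}$, deleting the $k$ largest letters from the cycle decomposition of $\pi$ yields a permutation with no double excedances; $\mathcal{SS}_n$ is the set of these, and $S_n(x,q)=\sum_{\pi\in\mathcal{SS}_n}x^{{\rm exc}(\pi)}q^{{\rm cyc}(\pi)}$. *)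

theory Defs
  imports Complex_Main "HOL-Computational_Algebra.Polynomial" "HOL-Combinatorics.Permutations"
begin

text \<open>Deleting all letters larger than m from the cycle decomposition of p:
  the resulting permutation of [m] sends i to the first element of
  p i, p (p i), ... that is at most m.\<close>
definition del_large :: "nat \<Rightarrow> (nat \<Rightarrow> nat) \<Rightarrow> nat \<Rightarrow> nat" where
  "del_large m p i =
     (if i \<in> {1..m} then (p ^^ (LEAST j. 0 < j \<and> (p ^^ j) i \<le> m)) i else i)"

definition double_exc :: "nat \<Rightarrow> (nat \<Rightarrow> nat) \<Rightarrow> nat \<Rightarrow> bool" where
  "double_exc m s x \<longleftrightarrow> x \<in> {1..m} \<and> inv_into {1..m} s x < x \<and> x < s x"

definition simsun2 :: "nat \<Rightarrow> (nat \<Rightarrow> nat) set" where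
  "simsun2 n = {p. p permutes {1..n} \<and>
     (\<forall>k\<in>{0..n}. \<not> (\<exists>x. double_exc (n - k) (del_large (n - k) p) x))}"

definition exc :: "nat \<Rightarrow> (nat \<Rightarrow> nat) \<Rightarrow> nat" where
  "exc n p = card {i \<in> {1..n}. i < p i}"

text \<open>Number of cycles (fixed points count as cycles): number of distinct orbits.\<close>
definition cyc :: "nat \<Rightarrow> (nat \<Rightarrow> nat) \<Rightarrow> nat" where
  "cyc n p = card ((\<lambda>i. {(p ^^ j) i | j. True}) ` {1..n})"

definition S_poly :: "nat \<Rightarrow> real \<Rightarrow> complex poly" where
  "S_poly n q = (\<Sum>p\<in>simsun2 n. monom (complex_of_real (q ^ cyc n p)) (exc n p))"

end

(*
  Deleting the letter n + 1 from the cycle notation of a simsun permutation of [n + 1] leaves a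
  simsun permutation s of [n]. Conversely, n + 1 can be inserted as a new fixed point (one more
  cycle), or right after any letter a with a \<le> s\<^sup>-\<^sup>1(a); of these n - exc s letters, the
  exc s excedances of s keep the number of excedances and the others raise it by one. Hence
    S_{n+1}(x, q) = (q + n x) S_n(x, q) + x (1 - 2 x) S_n'(x, q).
  By induction S_n is a positive multiple of a product of n div 2 distinct negative linear
  factors: the right-hand side alternates in sign at the roots of S_n and at 0, so the
  intermediate value theorem gives n div 2 interlacing roots of S_{n+1}; for odd n the degree
  grows, and the sign at the smallest root of S_n produces one more root to its left.
*)

theory Submission
  imports Defs "HOL-Combinatorics.Orbits"
begin

lemma permutes_fixes_Suc:
  assumes "s permutes {1..n}"
  shows "s (Suc n) = Suc n"
  by (rule permutes_not_in[OF assms]) simp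

lemma permutes_neq_Suc:
  assumes "s permutes {1..n}" "i \<noteq> Suc n"
  shows "s i \<noteq> Suc n"
proof (cases "i \<in> {1..n}")
  case True
  then have "s i \<in> {1..n}" using permutes_in_image[OF assms(1)] by simp
  then show ?thesis by auto
next
  case False
  then show ?thesis using permutes_not_in[OF assms(1)] assms(2) by simp
qed

lemma inv_into_permutes_eqI:
  assumes "f permutes S" "y \<in> S" "f y = x"
  shows "inv_into S f x = y"
  using inv_into_f_f[OF permutes_inj_on[OF assms(1)] assms(2)] assms(3) by simp

lemma inv_into_permutes:
  assumes "f permutes S" "x \<in> S"
  shows "inv_into S f x \<in> S" "f (inv_into S f x) = x"
  using assms permutes_image[OF assms(1)] by (auto intro: inv_into_into f_inv_into_f)

section \<open>Removing and inserting the largest letter\<close>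

text \<open>In cycle notation, \<open>remove_max n p\<close> deletes the letter \<open>n + 1\<close> from its cycle, and
  \<open>insert_max n s a\<close> inserts it right after \<open>a\<close>, or as a new fixed point if \<open>a = 0\<close>.\<close>

definition remove_max :: "nat \<Rightarrow> (nat \<Rightarrow> nat) \<Rightarrow> nat \<Rightarrow> nat" where
  "remove_max n p = Transposition.transpose (Suc n) (p (Suc n)) \<circ> p"

definition insert_max :: "nat \<Rightarrow> (nat \<Rightarrow> nat) \<Rightarrow> nat \<Rightarrow> nat \<Rightarrow> nat" where
  "insert_max n s a = (if a = 0 then s else s \<circ> Transposition.transpose a (Suc n))"

definition insert_pos :: "nat \<Rightarrow> (nat \<Rightarrow> nat) \<Rightarrow> nat" where
  "insert_pos n p = (if p (Suc n) = Suc n then 0 else inv p (Suc n))"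

lemma remove_max_apply:
  assumes "p permutes {1..Suc n}"
  shows "remove_max n p i =
    (if p i = Suc n then p (Suc n) else if i = Suc n then Suc n else p i)"
  using permutes_inj[OF assms] unfolding remove_max_def transpose_def by (auto simp: inj_eq)

lemma permutes_remove_max:
  assumes "p permutes {1..Suc n}"
  shows "remove_max n p permutes {1..n}"
proof -
  have "p (Suc n) \<in> {1..Suc n}" using assms permutes_in_image by fastforce
  then have "Transposition.transpose (Suc n) (p (Suc n)) permutes {1..Suc n}"
    by (intro permutes_swap_id) auto
  then have "remove_max n p permutes {1..Suc n}"
    unfolding remove_max_def using assms permutes_compose by blast
  moreover have "remove_max n p x = x" if "x \<in> {1..Suc n} - {1..n}" for x
  proof -
    have "x = Suc n" using that by auto
    then show ?thesis using remove_max_apply[OF assms, of "Suc n"] by simp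
  qed
  ultimately show ?thesis by (rule permutes_superset)
qed

lemma insert_max_apply:
  assumes "s permutes {1..n}" "a \<in> {1..n}"
  shows "insert_max n s a i = (if i = a then Suc n else if i = Suc n then s a else s i)"
  using assms unfolding insert_max_def transpose_def by (auto simp: permutes_not_in)

lemma permutes_insert_max:
  assumes "s permutes {1..n}" "a \<le> n"
  shows "insert_max n s a permutes {1..Suc n}"
proof -
  have "s permutes {1..Suc n}" using assms(1) by (rule permutes_subset) auto
  moreover have "a \<noteq> 0 \<Longrightarrow> Transposition.transpose a (Suc n) permutes {1..Suc n}"
    using assms(2) by (intro permutes_swap_id) auto
  ultimately show ?thesis unfolding insert_max_def using permutes_compose by auto
qed

lemma insert_max_eq_Suc_iff:
  assumes "s permutes {1..n}" "a \<le> n"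
  shows "insert_max n s a i = Suc n \<longleftrightarrow> (if a = 0 then i = Suc n else i = a)"
proof (cases "a = 0")
  case True
  then show ?thesis
    using permutes_neq_Suc[OF assms(1)] permutes_fixes_Suc[OF assms(1)]
    by (auto simp: insert_max_def)
next
  case False
  then show ?thesis using assms insert_max_apply[OF assms(1), of a i]
    permutes_neq_Suc[OF assms(1), of a] permutes_neq_Suc[OF assms(1), of i] by auto
qed

lemma remove_max_insert_max:
  assumes "s permutes {1..n}" "a \<le> n"
  shows "remove_max n (insert_max n s a) = s"
proof
  fix i
  have P: "insert_max n s a permutes {1..Suc n}" by (rule permutes_insert_max[OF assms])
  show "remove_max n (insert_max n s a) i = s i"
  proof (cases "a = 0")
    case True
    then show ?thesis
      using remove_max_apply[OF P, of i] permutes_fixes_Suc[OF assms(1)]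
        permutes_neq_Suc[OF assms(1), of i] by (auto simp: insert_max_def)
  next
    case False
    then have a: "a \<in> {1..n}" using assms by auto
    then show ?thesis
      using remove_max_apply[OF P, of i] insert_max_apply[OF assms(1) a]
        permutes_neq_Suc[OF assms(1), of a] permutes_neq_Suc[OF assms(1), of i]
        permutes_fixes_Suc[OF assms(1)] by auto
  qed
qed

lemma insert_max_remove_max:
  assumes "p permutes {1..Suc n}"
  shows "insert_pos n p \<le> n" "insert_max n (remove_max n p) (insert_pos n p) = p"
proof -
  have R: "remove_max n p permutes {1..n}" by (rule permutes_remove_max[OF assms])
  define a where "a = inv p (Suc n)"
  have pa: "p a = Suc n" unfolding a_def by (rule permutes_inverses(1)[OF assms])
  have a_Suc: "a \<in> {1..Suc n}"
    unfolding a_def using permutes_in_image[OF permutes_inv[OF assms]] by simp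
  have p_eq: "p i = Suc n \<longleftrightarrow> i = a" for i
    using pa permutes_inverses(2)[OF assms, of i] unfolding a_def by auto
  show "insert_pos n p \<le> n"
    using a_Suc pa unfolding insert_pos_def a_def[symmetric] by (auto simp: le_Suc_eq)
  show "insert_max n (remove_max n p) (insert_pos n p) = p"
  proof (cases "p (Suc n) = Suc n")
    case True
    then show ?thesis
      by (auto simp: insert_pos_def insert_max_def remove_max_apply[OF assms] fun_eq_iff)
  next
    case False
    then have a: "a \<in> {1..n}" "insert_pos n p = a"
      using a_Suc pa unfolding insert_pos_def a_def[symmetric] by (auto simp: le_Suc_eq)
    show ?thesis
    proof
      fix i
      show "insert_max n (remove_max n p) (insert_pos n p) i = p i"
        unfolding a(2) insert_max_apply[OF R a(1)]
        using remove_max_apply[OF assms, of i] remove_max_apply[OF assms, of a] p_eq[of i] pa a(1)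
        by auto
    qed
  qed
qed

lemma insert_pos_insert_max:
  assumes "s permutes {1..n}" "a \<le> n"
  shows "insert_pos n (insert_max n s a) = a"
proof (cases "a = 0")
  case True
  then show ?thesis
    unfolding insert_pos_def using insert_max_eq_Suc_iff[OF assms, of "Suc n"] by simp
next
  case False
  have "insert_max n s a a = Suc n" using insert_max_eq_Suc_iff[OF assms, of a] False by simp
  then have "inv (insert_max n s a) (Suc n) = a"
    using permutes_inverses(2)[OF permutes_insert_max[OF assms], of a] by simp
  then show ?thesis
    unfolding insert_pos_def using insert_max_eq_Suc_iff[OF assms, of "Suc n"] False assms(2)
    by auto
qed

section \<open>Deleting large letters\<close>

lemma del_large_outside: "i \<notin> {1..m} \<Longrightarrow> del_large m p i = i"
  unfolding del_large_def by (rule if_not_P)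

lemma del_large_eq_first_hit:
  assumes "i \<in> {1..m}" "0 < j" "(p ^^ j) i \<le> m" "\<forall>l. 0 < l \<and> l < j \<longrightarrow> m < (p ^^ l) i"
  shows "del_large m p i = (p ^^ j) i"
proof -
  have "(LEAST j. 0 < j \<and> (p ^^ j) i \<le> m) = j"
  proof (rule Least_equality)
    show "\<And>y. 0 < y \<and> (p ^^ y) i \<le> m \<Longrightarrow> j \<le> y" using assms(4) by (meson leD leI)
  qed (use assms(2,3) in simp)
  then show ?thesis using assms(1) by (simp add: del_large_def)
qed

lemma del_large_first_hit:
  fixes p :: "nat \<Rightarrow> nat"
  assumes "p permutes {1..N}" "i \<in> {1..m}"
  obtains j where "0 < j" "(p ^^ j) i \<le> m" "\<forall>l. 0 < l \<and> l < j \<longrightarrow> m < (p ^^ l) i"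
proof -
  have "permutation p" by (rule permutes_imp_permutation[OF _ assms(1)]) simp
  then obtain k where "0 < k" "(p ^^ k) i = i" using permutation_self[of p i] by blast
  then have ex: "\<exists>j. 0 < j \<and> (p ^^ j) i \<le> m" using assms(2) by (intro exI[of _ k]) simp
  show thesis
  proof (rule that)
    show "0 < (LEAST j. 0 < j \<and> (p ^^ j) i \<le> m)" "(p ^^ (LEAST j. 0 < j \<and> (p ^^ j) i \<le> m)) i \<le> m"
      using LeastI_ex[OF ex] by simp_all
    show "\<forall>l. 0 < l \<and> l < (LEAST j. 0 < j \<and> (p ^^ j) i \<le> m) \<longrightarrow> m < (p ^^ l) i"
    proof (intro allI impI)
      fix l assume l: "0 < l \<and> l < (LEAST j. 0 < j \<and> (p ^^ j) i \<le> m)"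
      then have "\<not> (0 < l \<and> (p ^^ l) i \<le> m)" by (intro not_less_Least) simp
      then show "m < (p ^^ l) i" using l by simp
    qed
  qed
qed

lemma del_large_all:
  assumes "p permutes {1..n}"
  shows "del_large n p = p"
proof
  fix i
  show "del_large n p i = p i"
  proof (cases "i \<in> {1..n}")
    case True
    then have "p i \<in> {1..n}" using permutes_in_image[OF assms] by simp
    then show ?thesis using del_large_eq_first_hit[OF True, of 1 p] by simp
  next
    case False
    then show ?thesis using permutes_not_in[OF assms False] del_large_outside[OF False] by simp
  qed
qed

text \<open>One step of \<open>remove_max n p\<close> is one step of \<open>p\<close>, or two steps passing through \<open>n + 1\<close>.\<close>

lemma remove_max_as_funpow:
  assumes P: "p permutes {1..Suc n}" and y: "y \<in> {1..n}" and "m \<le> n"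
  obtains k where "0 < k" "(p ^^ k) y = remove_max n p y" "\<forall>l. 0 < l \<and> l < k \<longrightarrow> m < (p ^^ l) y"
proof (cases "p y = Suc n")
  case True
  then have "(p ^^ 2) y = remove_max n p y" "\<forall>l. 0 < l \<and> l < 2 \<longrightarrow> m < (p ^^ l) y"
    using remove_max_apply[OF P, of y] \<open>m \<le> n\<close> by (auto simp: numeral_2_eq_2 less_Suc_eq)
  then show thesis by (intro that[of 2]) auto
next
  case False
  then have "(p ^^ 1) y = remove_max n p y" using remove_max_apply[OF P, of y] y by auto
  then show thesis by (intro that[of 1]) auto
qed

lemma remove_max_funpow_first_hit:
  assumes P: "p permutes {1..Suc n}" and i: "i \<in> {1..n}" and "m \<le> n"
  shows "\<forall>l. 0 < l \<and> l \<le> j \<longrightarrow> m < (remove_max n p ^^ l) i \<Longrightarrow>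
    \<exists>j'>0. (p ^^ j') i = (remove_max n p ^^ Suc j) i \<and> (\<forall>l. 0 < l \<and> l < j' \<longrightarrow> m < (p ^^ l) i)"
proof (induction j)
  case 0
  obtain k where "0 < k" "(p ^^ k) i = remove_max n p i" "\<forall>l. 0 < l \<and> l < k \<longrightarrow> m < (p ^^ l) i"
    by (rule remove_max_as_funpow[OF P i \<open>m \<le> n\<close>])
  then show ?case by auto
next
  case (Suc j)
  then obtain j' where j': "0 < j'" "(p ^^ j') i = (remove_max n p ^^ Suc j) i"
      "\<forall>l. 0 < l \<and> l < j' \<longrightarrow> m < (p ^^ l) i"
    by auto
  define y where "y = (remove_max n p ^^ Suc j) i"
  have y: "y \<in> {1..n}"
    unfolding y_def by (rule permutes_in_funpow_image[OF permutes_remove_max[OF P] i])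
  have m_y: "m < y" unfolding y_def using Suc.prems by blast
  obtain k where k: "0 < k" "(p ^^ k) y = remove_max n p y" "\<forall>l. 0 < l \<and> l < k \<longrightarrow> m < (p ^^ l) y"
    by (rule remove_max_as_funpow[OF P y \<open>m \<le> n\<close>])
  have p_split: "(p ^^ l) i = (p ^^ (l - j')) y" if "j' \<le> l" for l
    using that j'(2) unfolding y_def by (metis funpow_add comp_apply le_add_diff_inverse2)
  show ?case
  proof (intro exI conjI allI impI)
    show "0 < k + j'" using k(1) by simp
    show "(p ^^ (k + j')) i = (remove_max n p ^^ Suc (Suc j)) i"
      using p_split[of "k + j'"] k(2) unfolding y_def by simp
    fix l assume l: "0 < l \<and> l < k + j'"
    show "m < (p ^^ l) i"
    proof (cases "l < j'")
      case False
      then show ?thesis using p_split[of l] k(3) m_y l by (cases "l = j'") auto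
    qed (use j'(3) l in auto)
  qed
qed

lemma del_large_remove_max:
  assumes P: "p permutes {1..Suc n}" and "m \<le> n"
  shows "del_large m (remove_max n p) = del_large m p"
proof
  fix i
  show "del_large m (remove_max n p) i = del_large m p i"
  proof (cases "i \<in> {1..m}")
    case True
    obtain J where J: "0 < J" "(remove_max n p ^^ J) i \<le> m"
        "\<forall>l. 0 < l \<and> l < J \<longrightarrow> m < (remove_max n p ^^ l) i"
      by (rule del_large_first_hit[OF permutes_remove_max[OF P] True])
    then obtain j where j: "J = Suc j" using gr0_implies_Suc by blast
    have i: "i \<in> {1..n}" using True \<open>m \<le> n\<close> by auto
    obtain j' where "0 < j'" "(p ^^ j') i = (remove_max n p ^^ J) i"
        "\<forall>l. 0 < l \<and> l < j' \<longrightarrow> m < (p ^^ l) i"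
      using remove_max_funpow_first_hit[OF P i \<open>m \<le> n\<close>, of j] J(3) unfolding j by auto
    then show ?thesis
      using del_large_eq_first_hit[OF True J] del_large_eq_first_hit[OF True, of j' p] J(2) by simp
  next
    case False
    then show ?thesis by (simp add: del_large_outside)
  qed
qed

lemma simsun2_Suc:
  "simsun2 (Suc n) = {p. p permutes {1..Suc n} \<and> remove_max n p \<in> simsun2 n \<and>
     \<not> (\<exists>x. double_exc (Suc n) p x)}"
proof -
  let ?ok = "\<lambda>p m. \<not> (\<exists>x. double_exc m (del_large m p) x)"
  have reindex: "(\<forall>k\<in>{0..N}. Q (N - k)) \<longleftrightarrow> (\<forall>m\<le>N. Q m)" for N :: nat and Q
    by (metis atLeastAtMost_iff diff_diff_cancel diff_le_self zero_le)
  have mem: "p \<in> simsun2 N \<longleftrightarrow> p permutes {1..N} \<and> (\<forall>m\<le>N. ?ok p m)" for p N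
    using reindex[of N "?ok p"] unfolding simsun2_def by simp
  have key: "(\<forall>m\<le>Suc n. ?ok p m) \<longleftrightarrow>
      \<not> (\<exists>x. double_exc (Suc n) p x) \<and> (\<forall>m\<le>n. ?ok (remove_max n p) m)"
    if P: "p permutes {1..Suc n}" for p
    using del_large_all[OF P] del_large_remove_max[OF P] by (auto simp: le_Suc_eq)
  show ?thesis
  proof (intro set_eqI)
    fix p
    show "p \<in> simsun2 (Suc n) \<longleftrightarrow> p \<in> {p. p permutes {1..Suc n} \<and>
        remove_max n p \<in> simsun2 n \<and> \<not> (\<exists>x. double_exc (Suc n) p x)}"
    proof (cases "p permutes {1..Suc n}")
      case True
      then show ?thesis
        using key[OF True] mem[of p "Suc n"] mem[of "remove_max n p" n] permutes_remove_max[OF True]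
        by auto
    qed (simp add: mem)
  qed
qed

section \<open>Statistics of an inserted permutation\<close>

lemma inv_into_insert_max:
  assumes S: "s permutes {1..n}" and a: "a \<in> {1..n}" and x: "x \<in> {1..Suc n}"
  shows "inv_into {1..Suc n} (insert_max n s a) x =
    (if x = Suc n then a else if x = s a then Suc n else inv_into {1..n} s x)"
proof -
  have T: "insert_max n s a permutes {1..Suc n}" using permutes_insert_max[OF S] a by simp
  note t = insert_max_apply[OF S a]
  show ?thesis
  proof (cases "x = Suc n \<or> x = s a")
    case True
    have "inv_into {1..Suc n} (insert_max n s a) (Suc n) = a"
      by (rule inv_into_permutes_eqI[OF T]) (use a t in auto)
    moreover have "inv_into {1..Suc n} (insert_max n s a) (s a) = Suc n"
      by (rule inv_into_permutes_eqI[OF T]) (use a t in auto)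
    ultimately show ?thesis using True by auto
  next
    case False
    then have "x \<in> {1..n}" using x by auto
    from inv_into_permutes[OF S this]
    have "inv_into {1..n} s x \<in> {1..n}" "s (inv_into {1..n} s x) = x" .
    moreover from this have "inv_into {1..n} s x \<noteq> a" using False by auto
    ultimately have "inv_into {1..Suc n} (insert_max n s a) x = inv_into {1..n} s x"
      by (intro inv_into_permutes_eqI[OF T]) (auto simp: t)
    then show ?thesis using False by simp
  qed
qed

lemma double_exc_Suc:
  assumes S: "s permutes {1..n}"
  shows "double_exc (Suc n) s x \<longleftrightarrow> double_exc n s x"
proof (cases "x \<in> {1..n}")
  case True
  from inv_into_permutes[OF S True]
  have "inv_into {1..Suc n} s x = inv_into {1..n} s x"
    by (intro inv_into_permutes_eqI[OF permutes_subset[OF S]]) auto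
  then show ?thesis using True by (simp add: double_exc_def)
next
  case False
  then show ?thesis using permutes_not_in[OF S False] by (simp add: double_exc_def)
qed

lemma double_exc_insert_max:
  assumes S: "s permutes {1..n}" and "a \<le> n" and no_dexc: "\<not> (\<exists>x. double_exc n s x)"
  shows "(\<exists>x. double_exc (Suc n) (insert_max n s a) x) \<longleftrightarrow> a \<noteq> 0 \<and> inv_into {1..n} s a < a"
proof (cases "a = 0")
  case True
  then show ?thesis using no_dexc double_exc_Suc[OF S] by (simp add: insert_max_def)
next
  case False
  then have a: "a \<in> {1..n}" using \<open>a \<le> n\<close> by auto
  note t = insert_max_apply[OF S a] and t_inv = inv_into_insert_max[OF S a]
  have sa: "s a \<in> {1..n}" using permutes_in_image[OF S] a by simp
  have "s a \<noteq> a" if "inv_into {1..n} s a < a"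
    using that inv_into_permutes_eqI[OF S a] by auto
  moreover have "x = a" if "double_exc (Suc n) (insert_max n s a) x" for x
  proof (rule ccontr)
    assume "x \<noteq> a"
    moreover have "x \<noteq> Suc n" "x \<noteq> s a"
      using that t_inv[of x] t[of x] sa unfolding double_exc_def by auto
    ultimately have "double_exc n s x"
      using that t_inv[of x] t[of x] unfolding double_exc_def by auto
    then show False using no_dexc by blast
  qed
  moreover have "inv_into {1..Suc n} (insert_max n s a) a = inv_into {1..n} s a" if "s a \<noteq> a"
    using t_inv[of a] a that by auto
  moreover have "insert_max n s a a = Suc n" using t by simp
  ultimately show ?thesis
    using False a t_inv[of a] unfolding double_exc_def
    by (metis atLeastAtMost_iff le_SucI less_Suc_eq_le not_less_iff_gr_or_eq)
qed

lemma exc_insert_max: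
  assumes S: "s permutes {1..n}" and "a \<le> n"
  shows "exc (Suc n) (insert_max n s a) = exc n s + (if a \<noteq> 0 \<and> \<not> a < s a then 1 else 0)"
proof (cases "a = 0")
  case True
  have "{i \<in> {1..Suc n}. i < s i} = {i \<in> {1..n}. i < s i}"
    using permutes_fixes_Suc[OF S] by (auto simp: le_Suc_eq)
  then show ?thesis using True by (simp add: exc_def insert_max_def)
next
  case False
  then have a: "a \<in> {1..n}" using \<open>a \<le> n\<close> by auto
  have "s a \<in> {1..n}" using permutes_in_image[OF S] a by simp
  then have "{i \<in> {1..Suc n}. i < insert_max n s a i} = insert a {i \<in> {1..n}. i < s i}"
    using a by (auto simp: insert_max_apply[OF S a] le_Suc_eq)
  then show ?thesis using False a by (simp add: exc_def insert_absorb)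
qed

lemma card_excedance_values:
  assumes S: "s permutes {1..n}"
  shows "card {a \<in> {1..n}. inv_into {1..n} s a < a} = exc n s"
proof -
  let ?E = "{i \<in> {1..n}. i < s i}"
  have "s ` ?E = {a \<in> {1..n}. inv_into {1..n} s a < a}"
  proof (intro set_eqI iffI)
    fix a assume "a \<in> s ` ?E"
    then obtain i where "i \<in> ?E" "a = s i" by blast
    moreover from this have "inv_into {1..n} s (s i) = i"
      by (intro inv_into_permutes_eqI[OF S]) auto
    ultimately show "a \<in> {a \<in> {1..n}. inv_into {1..n} s a < a}"
      using permutes_in_image[OF S] by auto
  next
    fix a assume a: "a \<in> {a \<in> {1..n}. inv_into {1..n} s a < a}"
    with inv_into_permutes[OF S] show "a \<in> s ` ?E"
      by (intro image_eqI[of _ _ "inv_into {1..n} s a"]) auto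
  qed
  moreover have "inj_on s ?E"
    using permutes_inj_on[OF S] by (rule inj_on_subset) auto
  ultimately show ?thesis unfolding exc_def using card_image by fastforce
qed

lemma cyc_eq_card_orbits:
  assumes "p permutes {1..n}"
  shows "cyc n p = card (orbit p ` {1..n})"
proof -
  have "permutation p" by (rule permutes_imp_permutation[OF _ assms]) simp
  then show ?thesis unfolding cyc_def orbit_altdef_permutation[OF \<open>permutation p\<close>] by simp
qed

lemma orbit_eq_if_mem:
  assumes "permutation f" "y \<in> orbit f x"
  shows "orbit f y = orbit f x"
  by (rule orbit_cyclic_eq3[OF cyclic_on_orbit'[OF assms(1)] assms(2)])

lemma remove_max_in_orbit:
  assumes P: "p permutes {1..Suc n}" and y: "y \<in> {1..n}"
  shows "remove_max n p y \<in> orbit p y"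
proof -
  obtain k where "0 < k" "(p ^^ k) y = remove_max n p y"
    by (rule remove_max_as_funpow[OF P y, of 0]) auto
  then show ?thesis unfolding orbit_altdef by (auto intro: exI[of _ k])
qed

lemma orbit_remove_max:
  assumes P: "p permutes {1..Suc n}" and i: "i \<in> {1..n}"
  shows "orbit (remove_max n p) i = orbit p i - {Suc n}"
proof
  let ?r = "remove_max n p"
  have r: "?r permutes {1..n}" by (rule permutes_remove_max[OF P])
  have "y \<in> orbit p i \<and> y \<in> {1..n}" if "y \<in> orbit ?r i" for y
    using that
  proof induction
    case base
    show ?case using remove_max_in_orbit[OF P i] permutes_in_image[OF r] i by blast
  next
    case (step y)
    then show ?case
      using remove_max_in_orbit[OF P, of y] permutes_in_image[OF r] by (blast intro: orbit_trans)
  qed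
  then show "orbit ?r i \<subseteq> orbit p i - {Suc n}" by fastforce
  \<comment> \<open>\<open>remove_max n p\<close> visits the \<open>p\<close>-orbit of \<open>i\<close> in order, jumping over \<open>n + 1\<close>.\<close>
  have "(if y = Suc n then p (Suc n) else y) \<in> orbit ?r i" if "y \<in> orbit p i" for y
    using that
  proof induction
    case base
    have "?r i \<in> orbit ?r i" by (rule orbit.base)
    then show ?case using remove_max_apply[OF P, of i] i by (auto split: if_splits)
  next
    case (step y)
    have "y \<noteq> Suc n \<Longrightarrow> ?r y \<in> orbit ?r i" using step.IH by (auto intro: orbit.step)
    then show ?case using step.IH remove_max_apply[OF P, of y] by (auto split: if_splits)
  qed
  then show "orbit p i - {Suc n} \<subseteq> orbit ?r i" by (metis Diff_iff singletonI subsetI)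
qed

lemma cyc_remove_max:
  assumes P: "p permutes {1..Suc n}" and moved: "p (Suc n) \<noteq> Suc n"
  shows "cyc (Suc n) p = cyc n (remove_max n p)"
proof -
  have perm: "permutation p" by (rule permutes_imp_permutation[OF _ P]) simp
  define a where "a = inv p (Suc n)"
  have pa: "p a = Suc n" unfolding a_def by (rule permutes_inverses(1)[OF P])
  have "a \<in> {1..Suc n}"
    unfolding a_def using permutes_in_image[OF permutes_inv[OF P]] by simp
  then have a: "a \<in> {1..n}" using pa moved by (auto simp: le_Suc_eq)
  have "orbit p (Suc n) = orbit p a"
    using orbit_eq_if_mem[OF perm] orbit.base[of p a] pa by simp
  then have orbits: "orbit p ` {1..Suc n} = orbit p ` {1..n}"
    using a by (auto simp: le_Suc_eq)
  have "inj_on (\<lambda>X. X - {Suc n}) (orbit p ` {1..n})"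
  proof (rule inj_onI)
    fix X Y assume X: "X \<in> orbit p ` {1..n}" and Y: "Y \<in> orbit p ` {1..n}"
      and eq: "X - {Suc n} = Y - {Suc n}"
    obtain i where i: "i \<in> {1..n}" "X = orbit p i" using X by blast
    obtain j where j: "Y = orbit p j" using Y by blast
    have "i \<in> X - {Suc n}" using i permutation_self_in_orbit[OF perm] by auto
    then have "i \<in> orbit p j" using eq j by simp
    then show "X = Y" using orbit_eq_if_mem[OF perm] i j by simp
  qed
  moreover have "(\<lambda>X. X - {Suc n}) ` orbit p ` {1..n} = orbit (remove_max n p) ` {1..n}"
    using orbit_remove_max[OF P] by (auto simp: image_image)
  ultimately show ?thesis
    unfolding cyc_eq_card_orbits[OF P] cyc_eq_card_orbits[OF permutes_remove_max[OF P]] orbits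
    by (metis card_image)
qed

lemma cyc_insert_max:
  assumes S: "s permutes {1..n}" and "a \<le> n"
  shows "cyc (Suc n) (insert_max n s a) = cyc n s + (if a = 0 then 1 else 0)"
proof (cases "a = 0")
  case False
  then have "insert_max n s a (Suc n) \<noteq> Suc n"
    using insert_max_eq_Suc_iff[OF S \<open>a \<le> n\<close>] \<open>a \<le> n\<close> by simp
  then show ?thesis
    using cyc_remove_max[OF permutes_insert_max[OF S \<open>a \<le> n\<close>]]
      remove_max_insert_max[OF S \<open>a \<le> n\<close>] False
    by simp
next
  case True
  have perm: "permutation s" by (rule permutes_imp_permutation[OF _ S]) simp
  have "orbit s (Suc n) = {Suc n}"
    using permutes_fixes_Suc[OF S] by (simp add: orbit_eq_singleton_iff)
  moreover have "{1..Suc n} = insert (Suc n) {1..n}" by auto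
  ultimately have "orbit s ` {1..Suc n} = insert {Suc n} (orbit s ` {1..n})" by simp
  moreover have "{Suc n} \<notin> orbit s ` {1..n}"
  proof
    assume "{Suc n} \<in> orbit s ` {1..n}"
    then obtain i where "i \<in> {1..n}" "orbit s i = {Suc n}" by auto
    then show False using permutation_self_in_orbit[OF perm, of i] by auto
  qed
  ultimately show ?thesis
    using True cyc_eq_card_orbits[OF S]
      cyc_eq_card_orbits[OF permutes_subset[OF S, of "{1..Suc n}"]]
    by (simp add: insert_max_def)
qed

section \<open>The recurrence\<close>

lemma simsun2_permutes: "p \<in> simsun2 n \<Longrightarrow> p permutes {1..n}"
  unfolding simsun2_def by simp

lemma simsun2_no_double_exc:
  assumes "p \<in> simsun2 n"
  shows "\<not> double_exc n p x"
proof -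
  have "\<not> double_exc (n - 0) (del_large (n - 0) p) x"
    using assms unfolding simsun2_def
    by (metis (no_types, lifting) atLeastAtMost_iff mem_Collect_eq zero_le)
  then show ?thesis using del_large_all[OF simsun2_permutes[OF assms]] by simp
qed

lemma finite_simsun2: "finite (simsun2 n)"
  by (rule finite_subset[of _ "{p. p permutes {1..n}}"])
    (use simsun2_permutes finite_permutations in auto)

text \<open>Inserting \<open>n + 1\<close> right after \<open>a\<close> is allowed only if \<open>a \<le> s\<^sup>-\<^sup>1(a)\<close>; otherwise \<open>a\<close> becomes a
  double excedance.\<close>

definition insert_positions :: "nat \<Rightarrow> (nat \<Rightarrow> nat) \<Rightarrow> nat set" where
  "insert_positions n s = insert 0 {a \<in> {1..n}. \<not> inv_into {1..n} s a < a}"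

lemma sum_simsun2_Suc:
  "(\<Sum>p\<in>simsun2 (Suc n). f p) = (\<Sum>s\<in>simsun2 n. \<Sum>a\<in>insert_positions n s. f (insert_max n s a))"
proof -
  have "(\<Sum>s\<in>simsun2 n. \<Sum>a\<in>insert_positions n s. f (insert_max n s a)) =
      (\<Sum>(s, a)\<in>Sigma (simsun2 n) (insert_positions n). f (insert_max n s a))"
    by (rule sum.Sigma) (auto simp: finite_simsun2 insert_positions_def)
  also have "\<dots> = (\<Sum>p\<in>simsun2 (Suc n). f p)"
  proof (rule sum.reindex_bij_witness[of _ "\<lambda>p. (remove_max n p, insert_pos n p)"
      "case_prod (insert_max n)"])
    fix x assume "x \<in> Sigma (simsun2 n) (insert_positions n)"
    then obtain s a where x: "x = (s, a)" "s \<in> simsun2 n" "a \<in> insert_positions n s" by blast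
    have S: "s permutes {1..n}" by (rule simsun2_permutes[OF x(2)])
    have a: "a \<le> n" using x(3) by (auto simp: insert_positions_def)
    show "(remove_max n (case_prod (insert_max n) x),
        insert_pos n (case_prod (insert_max n) x)) = x"
      using remove_max_insert_max[OF S a] insert_pos_insert_max[OF S a] x(1) by simp
    have "\<not> (\<exists>y. double_exc (Suc n) (insert_max n s a) y)"
      using double_exc_insert_max[OF S a] simsun2_no_double_exc[OF x(2)] x(3)
      by (auto simp: insert_positions_def)
    then show "case_prod (insert_max n) x \<in> simsun2 (Suc n)"
      unfolding simsun2_Suc using permutes_insert_max[OF S a] remove_max_insert_max[OF S a] x
      by simp
  next
    fix p assume "p \<in> simsun2 (Suc n)"
    then have P: "p permutes {1..Suc n}" and R: "remove_max n p \<in> simsun2 n"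
      and D: "\<not> (\<exists>y. double_exc (Suc n) p y)"
      unfolding simsun2_Suc by auto
    note a = insert_max_remove_max[OF P]
    show "case_prod (insert_max n) (remove_max n p, insert_pos n p) = p" using a(2) by simp
    have "insert_pos n p \<in> insert_positions n (remove_max n p)"
      using double_exc_insert_max[OF permutes_remove_max[OF P] a(1)] simsun2_no_double_exc[OF R] a D
      by (auto simp: insert_positions_def)
    then show "(remove_max n p, insert_pos n p) \<in> Sigma (simsun2 n) (insert_positions n)"
      using R by simp
  qed (simp add: split_beta)
  finally show ?thesis ..
qed

definition weight :: "real \<Rightarrow> nat \<Rightarrow> (nat \<Rightarrow> nat) \<Rightarrow> complex poly" where
  "weight q n p = monom (complex_of_real (q ^ cyc n p)) (exc n p)"

lemma monom_recurrence:
  fixes c r :: complex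
  assumes "e + e \<le> n"
  shows "monom (r * c) e + of_nat e * monom c e + of_nat (n - e - e) * monom c (Suc e) =
    [:r, of_nat n:] * monom c e + [:0, 1, -2:] * pderiv (monom c e)"
proof -
  have n: "(of_nat n :: complex) = of_nat (n - e - e) + 2 * of_nat e"
    using assms by (simp add: of_nat_diff)
  have "poly (monom (r * c) e + of_nat e * monom c e + of_nat (n - e - e) * monom c (Suc e)) x =
      poly ([:r, of_nat n:] * monom c e + [:0, 1, -2:] * pderiv (monom c e)) x" for x
  proof (cases e)
    case (Suc k)
    show ?thesis unfolding n using Suc by (simp add: poly_monom pderiv_monom algebra_simps)
  qed (use n in \<open>simp add: poly_monom pderiv_monom algebra_simps\<close>)
  then show ?thesis by (simp add: poly_eq_poly_eq_iff[symmetric] fun_eq_iff)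
qed

lemma sum_weight_insert_max:
  assumes s: "s \<in> simsun2 n"
  shows "(\<Sum>a\<in>insert_positions n s. weight q (Suc n) (insert_max n s a)) =
    [:complex_of_real q, of_nat n:] * weight q n s + [:0, 1, -2:] * pderiv (weight q n s)"
proof -
  have S: "s permutes {1..n}" by (rule simsun2_permutes[OF s])
  define c where "c = complex_of_real (q ^ cyc n s)"
  define e where "e = exc n s"
  let ?w = "\<lambda>a. weight q (Suc n) (insert_max n s a)"
  let ?G = "{a \<in> {1..n}. \<not> inv_into {1..n} s a < a}"
  let ?E = "{i \<in> {1..n}. i < s i}"
  have E_G: "?E \<subseteq> ?G" using simsun2_no_double_exc[OF s] by (auto simp: double_exc_def)
  have card_E: "card ?E = e" unfolding e_def exc_def ..
  have "card ?G = card ({1..n} - {a \<in> {1..n}. inv_into {1..n} s a < a})"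
    by (rule arg_cong[of _ _ card]) auto
  then have "card ?G = n - e"
    using card_excedance_values[OF S] unfolding e_def by (subst (asm) card_Diff_subset) auto
  then have card_G_E: "card (?G - ?E) = n - e - e" and "e + e \<le> n"
    using card_E E_G card_mono[OF _ E_G] by (simp_all add: card_Diff_subset finite_subset)
  have w0: "?w 0 = monom (complex_of_real q * c) e"
    using cyc_insert_max[OF S, of 0] exc_insert_max[OF S, of 0]
    by (simp add: weight_def c_def e_def)
  have wE: "?w a = monom c e" if "a \<in> ?E" for a
    using that cyc_insert_max[OF S, of a] exc_insert_max[OF S, of a]
    by (simp add: weight_def c_def e_def)
  have wG: "?w a = monom c (Suc e)" if "a \<in> ?G - ?E" for a
    using that cyc_insert_max[OF S, of a] exc_insert_max[OF S, of a]
    by (simp add: weight_def c_def e_def)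
  have "(\<Sum>a\<in>insert_positions n s. ?w a) = ?w 0 + (\<Sum>a\<in>?G. ?w a)"
    unfolding insert_positions_def by (subst sum.insert) auto
  also have "(\<Sum>a\<in>?G. ?w a) = (\<Sum>a\<in>?G - ?E. ?w a) + (\<Sum>a\<in>?E. ?w a)"
    by (rule sum.subset_diff[OF E_G]) simp
  also have "(\<Sum>a\<in>?E. ?w a) = (\<Sum>a\<in>?E. monom c e)" by (rule sum.cong) (use wE in auto)
  also have "\<dots> = of_nat e * monom c e" using card_E by simp
  also have "(\<Sum>a\<in>?G - ?E. ?w a) = (\<Sum>a\<in>?G - ?E. monom c (Suc e))" by (rule sum.cong) (use wG in auto)
  also have "\<dots> = of_nat (n - e - e) * monom c (Suc e)" using card_G_E by simp
  also have "?w 0 + (of_nat (n - e - e) * monom c (Suc e) + of_nat e * monom c e) =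
      [:complex_of_real q, of_nat n:] * monom c e + [:0, 1, -2:] * pderiv (monom c e)"
    unfolding w0 monom_recurrence[OF \<open>e + e \<le> n\<close>, symmetric] by (simp only: ac_simps)
  finally show ?thesis by (simp add: weight_def c_def e_def)
qed

lemma pderiv_sum: "pderiv (\<Sum>x\<in>A. f x) = (\<Sum>x\<in>A. pderiv (f x))"
  by (induction A rule: infinite_finite_induct) (simp_all add: pderiv_add)

lemma S_poly_Suc:
  "S_poly (Suc n) q =
    [:complex_of_real q, of_nat n:] * S_poly n q + [:0, 1, -2:] * pderiv (S_poly n q)"
proof -
  have S: "S_poly m q = (\<Sum>p\<in>simsun2 m. weight q m p)" for m
    unfolding S_poly_def weight_def ..
  have "S_poly (Suc n) q =
      (\<Sum>s\<in>simsun2 n. \<Sum>a\<in>insert_positions n s. weight q (Suc n) (insert_max n s a))"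
    unfolding S by (rule sum_simsun2_Suc)
  also have "\<dots> = (\<Sum>s\<in>simsun2 n.
      [:complex_of_real q, of_nat n:] * weight q n s + [:0, 1, -2:] * pderiv (weight q n s))"
    by (rule sum.cong) (simp_all add: sum_weight_insert_max)
  also have "\<dots> = [:complex_of_real q, of_nat n:] * S_poly n q + [:0, 1, -2:] * pderiv (S_poly n q)"
    unfolding S pderiv_sum by (simp add: sum.distrib sum_distrib_left)
  finally show ?thesis .
qed

section \<open>Real-rootedness\<close>

lemma strict_mono_on_lessThanI:
  fixes f :: "nat \<Rightarrow> 'a::order"
  assumes "\<And>k. Suc k < d \<Longrightarrow> f k < f (Suc k)"
  shows "strict_mono_on {..<d} f"
proof (rule strict_mono_onI)
  fix i j assume "i \<in> {..<d}" "j \<in> {..<d}" "i < j"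
  then have sub: "{i..<j} \<subseteq> {k. Suc k < d}" by auto
  show "f i < f j" by (rule lift_Suc_mono_less_ivl[OF _ \<open>i < j\<close> sub]) (simp add: assms)
qed

lemma prod_negative_sign:
  fixes f :: "'a \<Rightarrow> 'b::linordered_idom"
  assumes "finite A" "\<And>a. a \<in> A \<Longrightarrow> f a < 0"
  shows "0 < (-1) ^ card A * prod f A"
  using assms
proof (induction A rule: finite_induct)
  case (insert a A)
  have "(-1) ^ card (insert a A) * prod f (insert a A) = ((-1) ^ card A * prod f A) * - f a"
    using insert.hyps by simp
  moreover have "0 < (-1) ^ card A * prod f A" "0 < - f a" using insert by simp_all
  ultimately show ?case by (metis mult_pos_pos)
qed simp

definition root_poly :: "(nat \<Rightarrow> real) \<Rightarrow> nat \<Rightarrow> real poly" where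
  "root_poly r d = (\<Prod>j<d. [:- r j, 1:])"

lemma poly_root_poly: "poly (root_poly r d) x = (\<Prod>j<d. x - r j)"
  unfolding root_poly_def poly_prod by simp

lemma degree_root_poly: "degree (root_poly r d) = d"
  unfolding root_poly_def by (subst degree_prod_eq_sum_degree) auto

lemma lead_coeff_root_poly: "lead_coeff (root_poly r d) = 1"
  unfolding root_poly_def lead_coeff_prod by simp

lemma root_poly_nonzero: "root_poly r d \<noteq> 0"
  using lead_coeff_root_poly[of r d] by auto

lemma root_poly_Suc: "root_poly r (Suc d) = root_poly r d * [:- r d, 1:]"
  unfolding root_poly_def by (rule prod.lessThan_Suc)

lemma root_poly_Suc_shift: "root_poly r (Suc d) = [:- r 0, 1:] * root_poly (\<lambda>k. r (Suc k)) d"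
  unfolding root_poly_def by (rule prod.lessThan_Suc_shift)

lemma poly_root_poly_pos:
  assumes "\<forall>j<d. r j < x"
  shows "0 < poly (root_poly r d) x"
  unfolding poly_root_poly using assms by (intro prod_pos) auto

lemma poly_root_poly_below_sign:
  assumes "\<forall>j<d. x < r j"
  shows "0 < (-1) ^ d * poly (root_poly r d) x"
  unfolding poly_root_poly using prod_negative_sign[of "{..<d}" "\<lambda>j. x - r j"] assms by simp

lemma poly_pderiv_root_poly:
  assumes "j < d"
  shows "poly (pderiv (root_poly r d)) (r j) = (\<Prod>i\<in>{..<d} - {j}. r j - r i)"
proof -
  let ?R = "\<Prod>i\<in>{..<d} - {j}. [:- r i, 1:]"
  have "root_poly r d = [:- r j, 1:] * ?R"
    unfolding root_poly_def using assms by (intro prod.remove) auto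
  then have "pderiv (root_poly r d) = [:- r j, 1:] * pderiv ?R + ?R * pderiv [:- r j, 1:]"
    by (simp only: pderiv_mult)
  moreover have "pderiv [:- r j, 1:] = 1" by (simp add: pderiv_pCons)
  ultimately show ?thesis by (simp add: poly_prod)
qed

lemma poly_pderiv_root_poly_sign:
  fixes r :: "nat \<Rightarrow> real"
  assumes r: "strict_mono_on {..<d} r" and "j < d"
  shows "0 < (-1) ^ (d - 1 - j) * (\<Prod>i\<in>{..<d} - {j}. r j - r i)"
proof -
  have split: "{..<d} - {j} = {..<j} \<union> {Suc j..<d}" using \<open>j < d\<close> by auto
  have "(\<Prod>i\<in>{..<d} - {j}. r j - r i) = (\<Prod>i<j. r j - r i) * (\<Prod>i\<in>{Suc j..<d}. r j - r i)"
    unfolding split by (rule prod.union_disjoint) auto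
  moreover have "0 < (\<Prod>i<j. r j - r i)"
  proof (intro prod_pos)
    fix i assume "i \<in> {..<j}"
    then show "0 < r j - r i" using strict_mono_onD[OF r, of i j] \<open>j < d\<close> by simp
  qed
  moreover have "0 < (-1) ^ (d - 1 - j) * (\<Prod>i\<in>{Suc j..<d}. r j - r i)"
    using prod_negative_sign[of "{Suc j..<d}" "\<lambda>i. r j - r i"] strict_mono_onD[OF r] by auto
  ultimately show ?thesis by (metis mult.left_commute mult_pos_pos)
qed

lemma root_poly_dvd:
  assumes t: "strict_mono_on {..<d} t" and roots: "\<forall>k<d. poly Q (t k) = 0"
  obtains g where "Q = root_poly t d * g"
  using assms
proof (induction d arbitrary: thesis)
  case 0
  then show ?case by (simp add: root_poly_def)
next
  case (Suc d)
  have "strict_mono_on {..<d} t" using Suc.prems(2) by (rule monotone_on_subset) auto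
  then obtain g where g: "Q = root_poly t d * g" using Suc by auto
  have "t d \<noteq> t j" if "j < d" for j using strict_mono_onD[OF Suc.prems(2), of j d] that by simp
  then have "0 \<noteq> poly (root_poly t d) (t d)" unfolding poly_root_poly by (auto simp: prod_zero_iff)
  moreover have "poly Q (t d) = 0" using Suc.prems(3) by simp
  ultimately have "poly g (t d) = 0" using g by simp
  then obtain g' where "g = [:- t d, 1:] * g'" by (auto simp: poly_eq_0_iff_dvd elim: dvdE)
  then have "Q = root_poly t (Suc d) * g'" using g by (simp only: root_poly_Suc mult.assoc)
  then show ?case by (rule Suc.prems(1))
qed

lemma interlacing_roots:
  fixes Q :: "real poly"
  assumes z: "\<And>k. k < d \<Longrightarrow> z k < z (Suc k)"
    and sign: "\<And>k. k \<le> d \<Longrightarrow> 0 < (-1) ^ (d - k) * poly Q (z k)"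
  obtains t where "strict_mono_on {..<d} t" "\<And>k. k < d \<Longrightarrow> z k < t k \<and> t k < z (Suc k)"
    "\<And>k. k < d \<Longrightarrow> poly Q (t k) = 0"
proof -
  have "\<exists>t. z k < t \<and> t < z (Suc k) \<and> poly Q t = 0" if k: "k < d" for k
  proof -
    define s :: real where "s = (-1) ^ (d - Suc k)"
    have "d - k = Suc (d - Suc k)" using k by simp
    then have "(-1::real) ^ (d - k) = - s" unfolding s_def by simp
    then have "0 < - s * poly Q (z k)" using sign[of k] k by simp
    moreover have "0 < s * poly Q (z (Suc k))" using sign[of "Suc k"] k unfolding s_def by simp
    ultimately have "0 < (- s * poly Q (z k)) * (s * poly Q (z (Suc k)))" by (rule mult_pos_pos)
    moreover have "s * s = 1" unfolding s_def by (simp flip: power_add)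
    ultimately have "poly Q (z k) * poly Q (z (Suc k)) < 0"
      by (simp add: algebra_simps) (metis mult.assoc mult_1 mult.commute neg_less_0_iff_less)
    then show ?thesis using poly_IVT[OF z[OF k]] by blast
  qed
  then obtain t where t: "\<And>k. k < d \<Longrightarrow> z k < t k \<and> t k < z (Suc k) \<and> poly Q (t k) = 0"
    by metis
  have "strict_mono_on {..<d} t"
  proof (rule strict_mono_on_lessThanI)
    fix k assume "Suc k < d"
    then show "t k < t (Suc k)" using t[of k] t[of "Suc k"] by simp
  qed
  then show thesis using that t by blast
qed

definition simple_negative_rooted :: "real poly \<Rightarrow> nat \<Rightarrow> bool" where
  "simple_negative_rooted P d \<longleftrightarrow>
    (\<exists>c r. 0 < c \<and> strict_mono_on {..<d} r \<and> (\<forall>j<d. r j < 0) \<and> P = smult c (root_poly r d))"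

lemma simple_negative_rooted_of_const_factor:
  assumes Q: "Q = root_poly t d * g" and "degree Q \<le> d" "0 < poly Q 0"
    and t: "strict_mono_on {..<d} t" "\<forall>k<d. t k < 0"
  shows "simple_negative_rooted Q d"
proof -
  have "g \<noteq> 0" using Q \<open>0 < poly Q 0\<close> by auto
  then have "degree g = 0"
    using Q \<open>degree Q \<le> d\<close> by (simp add: degree_mult_eq root_poly_nonzero degree_root_poly)
  then obtain g0 where g0: "g = [:g0:]" by (rule degree_eq_zeroE)
  have "0 < poly (root_poly t d) 0" using t(2) by (intro poly_root_poly_pos) auto
  then have "0 < g0" using \<open>0 < poly Q 0\<close> Q g0 by (simp add: zero_less_mult_iff)
  then show ?thesis unfolding simple_negative_rooted_def using Q g0 t by auto
qed

lemma simple_negative_rooted_of_linear_factor: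
  assumes Q: "Q = root_poly t d * g" and "degree Q = Suc d" "0 < lead_coeff Q"
    and z: "0 < (-1) ^ d * poly Q z" "z \<le> 0" "\<forall>k<d. z < t k"
    and t: "strict_mono_on {..<d} t" "\<forall>k<d. t k < 0"
  shows "simple_negative_rooted Q (Suc d)"
proof -
  have "g \<noteq> 0" using Q \<open>degree Q = Suc d\<close> by auto
  then have "degree g = 1"
    using Q \<open>degree Q = Suc d\<close> by (simp add: degree_mult_eq root_poly_nonzero degree_root_poly)
  then obtain a b where g: "g = [:b, a:]" "a \<noteq> 0" by (rule degree1_coeffs)
  have "lead_coeff Q = lead_coeff g" unfolding Q by (simp add: lead_coeff_mult lead_coeff_root_poly)
  then have "a = lead_coeff Q" using g by simp
  then have "0 < a" using \<open>0 < lead_coeff Q\<close> by simp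
  define u where "u = - b / a"
  have g_u: "g = smult a [:- u, 1:]" unfolding g(1) u_def using \<open>0 < a\<close> by simp
  have "0 < (-1) ^ d * poly (root_poly t d) z" using z(3) by (rule poly_root_poly_below_sign)
  moreover have "(-1) ^ d * poly Q z = ((-1) ^ d * poly (root_poly t d) z) * poly g z"
    using Q by simp
  ultimately have "0 < poly g z" using z(1) by (metis zero_less_mult_pos)
  then have "u < z" using \<open>0 < a\<close> unfolding g_u by (simp add: zero_less_mult_iff)
  define r where "r k = (if k = 0 then u else t (k - 1))" for k
  have "root_poly r (Suc d) = [:- u, 1:] * root_poly t d"
    unfolding root_poly_Suc_shift by (simp add: r_def)
  then have "Q = smult a (root_poly r (Suc d))"
    unfolding Q g_u by (simp only: mult_smult_right mult.commute)
  moreover have "strict_mono_on {..<Suc d} r"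
  proof (rule strict_mono_on_lessThanI)
    fix k assume "Suc k < Suc d"
    then show "r k < r (Suc k)"
      using \<open>u < z\<close> z(3) strict_mono_onD[OF t(1), of "k - 1" k] by (cases k) (auto simp: r_def)
  qed
  moreover have "\<forall>j<Suc d. r j < 0" using \<open>u < z\<close> \<open>z \<le> 0\<close> t(2) by (auto simp: r_def)
  ultimately show ?thesis unfolding simple_negative_rooted_def using \<open>0 < a\<close> by blast
qed

definition step_poly :: "real \<Rightarrow> nat \<Rightarrow> real poly \<Rightarrow> real poly" where
  "step_poly q n P = [:q, of_nat n:] * P + [:0, 1, -2:] * pderiv P"

lemma poly_step_poly:
  "poly (step_poly q n P) x = (q + of_nat n * x) * poly P x + x * (1 - 2 * x) * poly (pderiv P) x"
  by (simp add: step_poly_def algebra_simps)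

lemma coeff_step_poly_Suc:
  "coeff (step_poly q n P) (Suc k) =
    (q + of_nat (Suc k)) * coeff P (Suc k) + (of_nat n - 2 * of_nat k) * coeff P k"
  by (cases k) (simp_all add: step_poly_def coeff_pderiv algebra_simps)

lemma degree_step_poly:
  assumes "degree P \<le> d"
  shows "degree (step_poly q n P) \<le> Suc d"
    and "coeff (step_poly q n P) (Suc d) = (of_nat n - 2 * of_nat d) * coeff P d"
proof -
  show "degree (step_poly q n P) \<le> Suc d"
  proof (rule degree_le, intro allI impI)
    fix i assume "Suc d < i"
    then obtain k where "i = Suc k" "d < k" by (cases i) auto
    then show "coeff (step_poly q n P) i = 0"
      using assms by (simp add: coeff_step_poly_Suc coeff_eq_0)
  qed
  show "coeff (step_poly q n P) (Suc d) = (of_nat n - 2 * of_nat d) * coeff P d"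
    using assms by (simp add: coeff_step_poly_Suc coeff_eq_0)
qed

text \<open>At a root \<open>\<rho> < 0\<close> of \<open>P\<close> the factor \<open>\<rho>(1 - 2\<rho>)\<close> is negative, so \<open>step_poly q n P\<close> has the
  opposite sign of \<open>P'\<close> there.\<close>

lemma step_poly_sign_at_root:
  assumes "0 < c" and r: "strict_mono_on {..<d} r" "\<forall>j<d. r j < 0"
    and P: "P = smult c (root_poly r d)" and "j < d"
  shows "0 < (-1) ^ (d - j) * poly (step_poly q n P) (r j)"
proof -
  let ?D = "\<Prod>i\<in>{..<d} - {j}. r j - r i"
  have "poly P (r j) = 0" unfolding P poly_smult poly_root_poly using \<open>j < d\<close> by auto
  then have "poly (step_poly q n P) (r j) = (r j * ((1 - 2 * r j) * c)) * ?D"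
    unfolding poly_step_poly P pderiv_smult poly_smult poly_pderiv_root_poly[OF \<open>j < d\<close>] by simp
  moreover have "d - j = Suc (d - 1 - j)" using \<open>j < d\<close> by simp
  ultimately have "(-1) ^ (d - j) * poly (step_poly q n P) (r j) =
      - (r j * ((1 - 2 * r j) * c)) * ((-1) ^ (d - 1 - j) * ?D)"
    by simp
  moreover have "r j < 0" using r(2) \<open>j < d\<close> by simp
  then have "r j * ((1 - 2 * r j) * c) < 0" using \<open>0 < c\<close>
    by (intro mult_neg_pos mult_pos_pos) simp_all
  ultimately show ?thesis
    using poly_pderiv_root_poly_sign[OF r(1) \<open>j < d\<close>] by (simp add: mult_neg_pos)
qed

lemma simple_negative_rooted_step_poly:
  assumes "0 < q" and P: "simple_negative_rooted P (n div 2)"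
  shows "simple_negative_rooted (step_poly q n P) (Suc n div 2)"
proof -
  define d where "d = n div 2"
  obtain c r where c: "0 < c" and r: "strict_mono_on {..<d} r" "\<forall>j<d. r j < 0"
    and P: "P = smult c (root_poly r d)"
    using assms unfolding simple_negative_rooted_def d_def by blast
  define Q where "Q = step_poly q n P"
  have Q0: "0 < poly Q 0"
    using poly_root_poly_pos[of d r 0] r(2) \<open>0 < q\<close> c by (simp add: Q_def P poly_step_poly)
  define z where "z k = (if k < d then r k else 0)" for k
  have z_sign: "0 < (-1) ^ (d - k) * poly Q (z k)" if "k \<le> d" for k
    using step_poly_sign_at_root[OF c r P] Q0 that by (cases "k < d") (auto simp: z_def Q_def)
  have z_mono: "z k < z (Suc k)" if "k < d" for k
    using strict_mono_onD[OF r(1), of k "Suc k"] r(2) that by (auto simp: z_def)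
  obtain t where t: "strict_mono_on {..<d} t" and t_z: "\<And>k. k < d \<Longrightarrow> z k < t k \<and> t k < z (Suc k)"
      and roots: "\<And>k. k < d \<Longrightarrow> poly Q (t k) = 0"
    by (rule interlacing_roots[of d z Q, OF z_mono z_sign]) auto
  have "z k \<le> 0" for k using r(2) by (simp add: z_def less_imp_le)
  then have t_neg: "\<forall>k<d. t k < 0" using t_z by (meson less_le_trans)
  obtain g where g: "Q = root_poly t d * g" using root_poly_dvd[OF t] roots by blast
  have deg_P: "degree P \<le> d" and lead_P: "coeff P d = c"
    using c lead_coeff_root_poly[of r d, unfolded degree_root_poly]
    by (simp_all add: P degree_root_poly)
  have Q_ne: "Q \<noteq> 0" using Q0 by auto
  show ?thesis
  proof (cases "even n")
    case True
    then have "coeff Q (Suc d) = 0" "Suc n div 2 = d"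
      using degree_step_poly(2)[OF deg_P, of q n] unfolding Q_def d_def by (auto elim!: evenE)
    moreover from this have "degree Q \<le> d"
      using degree_step_poly(1)[OF deg_P, of q n] Q_ne unfolding Q_def[symmetric]
      by (metis le_SucE leading_coeff_0_iff)
    ultimately show ?thesis
      using simple_negative_rooted_of_const_factor[OF g _ Q0 t t_neg] unfolding Q_def by simp
  next
    case False
    then have "coeff Q (Suc d) = c" "Suc n div 2 = Suc d"
      using degree_step_poly(2)[OF deg_P, of q n] lead_P unfolding Q_def d_def by (auto elim!: oddE)
    moreover from this have "degree Q = Suc d"
      using degree_step_poly(1)[OF deg_P, of q n] c unfolding Q_def[symmetric]
      by (metis le_antisym le_degree less_irrefl)
    moreover have "z 0 < t k" if "k < d" for k
      using t_z[OF that] strict_mono_onD[OF r(1), of 0 k] that by (cases k) (auto simp: z_def)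
    moreover have "0 < (-1) ^ d * poly Q (z 0)" "z 0 \<le> 0" using z_sign[of 0] r(2)
      by (auto simp: z_def)
    ultimately show ?thesis
      using simple_negative_rooted_of_linear_factor[OF g, of "z 0"] c t t_neg unfolding Q_def
      by simp
  qed
qed

fun S_real :: "real \<Rightarrow> nat \<Rightarrow> real poly" where
  "S_real q 0 = 1"
| "S_real q (Suc n) = step_poly q n (S_real q n)"

lemma simple_negative_rooted_S_real:
  assumes "0 < q"
  shows "simple_negative_rooted (S_real q n) (n div 2)"
proof (induction n)
  case 0
  show ?case
    unfolding simple_negative_rooted_def
    by (intro exI[of _ 1] exI[of _ "\<lambda>_. 0"]) (simp add: root_poly_def monotone_on_def)
next
  case (Suc n)
  then show ?case using simple_negative_rooted_step_poly[OF assms] by simp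
qed

lemma map_poly_of_real_add:
  "map_poly complex_of_real (p + q) = map_poly complex_of_real p + map_poly complex_of_real q"
  by (intro poly_eqI) (simp add: coeff_map_poly)

lemma map_poly_of_real_mult:
  "map_poly complex_of_real (p * q) = map_poly complex_of_real p * map_poly complex_of_real q"
  by (induction p) (simp_all add: map_poly_of_real_add map_poly_smult map_poly_pCons)

lemma map_poly_of_real_pderiv:
  "map_poly complex_of_real (pderiv p) = pderiv (map_poly complex_of_real p)"
  by (intro poly_eqI) (simp add: coeff_map_poly coeff_pderiv)

lemma map_poly_of_real_prod:
  "map_poly complex_of_real (\<Prod>x\<in>A. f x) = (\<Prod>x\<in>A. map_poly complex_of_real (f x))"
  by (induction A rule: infinite_finite_induct) (simp_all add: map_poly_of_real_mult)

lemma order_prod_linear_distinct: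
  fixes \<rho> :: "nat \<Rightarrow> 'a::idom"
  assumes "inj_on \<rho> {..<d}" "j < d"
  shows "order (\<rho> j) (\<Prod>i<d. [:- \<rho> i, 1:]) = 1"
proof -
  let ?R = "\<Prod>i\<in>{..<d} - {j}. [:- \<rho> i, 1:]"
  have split: "(\<Prod>i<d. [:- \<rho> i, 1:]) = [:- \<rho> j, 1:] * ?R"
    using assms(2) by (intro prod.remove) auto
  have "poly ?R (\<rho> j) \<noteq> 0"
    using inj_onD[OF assms(1), of j] assms(2) by (auto simp: poly_prod prod_zero_iff)
  then have "?R \<noteq> 0" "order (\<rho> j) ?R = 0" by (auto intro: order_0I)
  moreover have "order (\<rho> j) [:- \<rho> j, 1:] = 1" using order_power_n_n[of "\<rho> j" 1] by simp
  moreover have "[:- \<rho> j, 1:] * ?R \<noteq> 0" using \<open>?R \<noteq> 0\<close> by (intro no_zero_divisors) simp_all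
  ultimately show ?thesis unfolding split order_mult[OF \<open>[:- \<rho> j, 1:] * ?R \<noteq> 0\<close>] by simp
qed

lemma zeros_of_real_simple_negative_rooted:
  assumes "simple_negative_rooted P d" and z: "poly (map_poly complex_of_real P) z = 0"
  shows "Im z = 0 \<and> Re z \<le> 0 \<and> order z (map_poly complex_of_real P) = 1"
proof -
  obtain c r where c: "0 < c" and r: "strict_mono_on {..<d} r" "\<forall>j<d. r j < 0"
    and P: "P = smult c (root_poly r d)"
    using assms(1) unfolding simple_negative_rooted_def by blast
  define \<rho> where "\<rho> j = complex_of_real (r j)" for j
  have "map_poly complex_of_real (\<Prod>j<d. [:- r j, 1:]) = (\<Prod>j<d. [:- \<rho> j, 1:])"
    by (simp add: map_poly_of_real_prod \<rho>_def map_poly_pCons)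
  then have P_C: "map_poly complex_of_real P = smult (complex_of_real c) (\<Prod>j<d. [:- \<rho> j, 1:])"
    unfolding P root_poly_def by (simp add: map_poly_smult)
  then obtain j where j: "j < d" "z = \<rho> j"
    using z c by (auto simp: poly_prod prod_zero_iff)
  have "inj_on \<rho> {..<d}"
    using strict_mono_on_imp_inj_on[OF r(1)] by (auto simp: \<rho>_def inj_on_def)
  then have "order z (map_poly complex_of_real P) = 1"
    unfolding P_C j(2) using c order_prod_linear_distinct[OF _ j(1)] by (simp add: order_smult)
  then show ?thesis using j r(2) by (simp add: \<rho>_def less_imp_le)
qed

lemma simsun2_0: "simsun2 0 = {id}"
proof -
  have "id \<in> simsun2 0" unfolding simsun2_def double_exc_def by simp
  moreover have "p = id" if "p \<in> simsun2 0" for p using simsun2_permutes[OF that] by simp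
  ultimately show ?thesis by blast
qed

lemma S_poly_eq_map_S_real: "S_poly n q = map_poly complex_of_real (S_real q n)"
proof (induction n)
  case 0
  show ?case by (simp add: S_poly_def simsun2_0 cyc_def exc_def)
next
  case (Suc n)
  show ?case
    unfolding S_poly_Suc Suc S_real.simps step_poly_def map_poly_of_real_add map_poly_of_real_mult
      map_poly_of_real_pderiv
    by (simp add: map_poly_pCons)
qed

theorem corollary14:
  fixes q :: real and n :: nat
  assumes "q > 0" and "n \<ge> 2"
  shows "\<forall>z. poly (S_poly n q) z = 0 \<longrightarrow>
           Im z = 0 \<and> Re z \<le> 0 \<and> order z (S_poly n q) = 1"
  using zeros_of_real_simple_negative_rooted[OF simple_negative_rooted_S_real[OF \<open>q > 0\<close>]]
  unfolding S_poly_eq_map_S_real by blast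

end
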